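(* Let $d_1,d_2\in\mathbb{N}$ and let $X,Y\in\mathcal{M}_{d_1}\otimes\mathcal{M}_{d_1}$ satisfy: (i) $X\geq 0$ and $Y\geq 0$; (ii) $(d_2-1)X^\Gamma\geq -Y^\Gamma$ and $(d_2+1)X^\Gamma\geq Y^\Gamma$; (iii) there exists $\ket{\alpha}\in\mathbb{C}^{d_1}\otimes\mathbb{C}^{d_1}$ with $\bra{\alpha}X\ket{\alpha}=0$ and $\bra{\alpha}Y\ket{\alpha}>0$. Define on $\mathbb{C}^{d_1}\otimes\mathbb{C}^{d_1}\otimes\mathbb{C}^{d_2}\otimes\mathbb{C}^{d_2}$ (factors labelled $A_1,B_1,A_2,B_2$) \[ Z = X_{A_1B_1}\otimes(\mathbb{1}-\omega)_{A_2B_2} + Y_{A_1B_1}\otimes\omega_{A_2B_2}, \] where $\omega$ is the maximally entangled projector on $\mathbb{C}^{d_2}\otimes\mathbb{C}^{d_2}$. Then, regarded as a bipartite operator with respect to $A=A_1A_2$ and $B=B_1B_2$, $Z$ is positive semidefinite, has positive partial transpose, and satisfies $\mathrm{SN}(Z)\geq\lceil d_2/d_1\rceil$.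
   Context: $\mathcal{M}_d$: complex $d\times d$ matrices. $\omega=\ket{\Omega}\bra{\Omega}$, $\ket{\Omega}=\frac{1}{\sqrt{d_2}}\sum_i\ket{i}\otimes\ket{i}$. For $W$ on $\mathbb{C}^{d}\otimes\mathbb{C}^{d}$, $W^\Gamma=(\mathrm{id}\otimes T)(W)$ with $T$ the transposition in the computational basis; $P\geq Q$ means $P-Q$ is positive semidefinite. A bipartite positive semidefinite operator has positive partial transpose (PPT) if its partial transpose on the $B$ system is positive semidefinite. The Schmidt rank of a vector $\ket{\psi}\in\mathbb{C}^{d_A}\otimes\mathbb{C}^{d_B}$ is the rank of $\mathrm{tr}_A\ket{\psi}\bra{\psi}$. For a nonzero positive semidefinite operator $\rho$ on $\mathbb{C}^{d_A}\otimes\mathbb{C}^{d_B}$, the Schmidt number $\mathrm{SN}(\rho)$ is the minimum, over all decompositions $\rho=\sum_i p_i\ket{\psi_i}\bra{\psi_i}$ with $p_i>0$, of $\max_i$ (Schmidt rank of $\ket{\psi_i}$). $\lceil x\rceil$ is the ceiling function. *)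

theory Defs
  imports "Jordan_Normal_Form.DL_Rank" "Jordan_Normal_Form.Conjugate"
begin

(* Convention: an operator on C^dA (x) C^dB is a complex (dA*dB) x (dA*dB) matrix;
   the basis vector |i> (x) |j> (i<dA, j<dB) has index i*dB + j. *)

definition qform :: "complex mat \<Rightarrow> complex vec \<Rightarrow> complex" where
  "qform M v = (\<Sum>i<dim_vec v. \<Sum>j<dim_vec v. cnj (v $ i) * M $$ (i, j) * v $ j)"

definition psd :: "nat \<Rightarrow> complex mat \<Rightarrow> bool" where
  "psd n M \<longleftrightarrow> M \<in> carrier_mat n n \<and>
     (\<forall>v \<in> carrier_vec n. Im (qform M v) = 0 \<and> Re (qform M v) \<ge> 0)"

definition op_ge :: "nat \<Rightarrow> complex mat \<Rightarrow> complex mat \<Rightarrow> bool" where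
  "op_ge n P Q \<longleftrightarrow> P \<in> carrier_mat n n \<and> Q \<in> carrier_mat n n \<and> psd n (P - Q)"

(* partial transpose on the B factor: <i j|W^Gamma|k l> = <i l|W|k j> *)
definition ptrans :: "nat \<Rightarrow> nat \<Rightarrow> complex mat \<Rightarrow> complex mat" where
  "ptrans dA dB W = mat (dA*dB) (dA*dB)
     (\<lambda>(r, c). W $$ ((r div dB) * dB + c mod dB, (c div dB) * dB + r mod dB))"

definition ppt :: "nat \<Rightarrow> nat \<Rightarrow> complex mat \<Rightarrow> bool" where
  "ppt dA dB W \<longleftrightarrow> psd (dA*dB) W \<and> psd (dA*dB) (ptrans dA dB W)"

(* maximally entangled projector omega = |Omega><Omega|, Omega = d^{-1/2} sum_i |i>|i> *)
definition omega :: "nat \<Rightarrow> complex mat" where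
  "omega d = mat (d*d) (d*d)
     (\<lambda>(r, c). if r div d = r mod d \<and> c div d = c mod d then 1 / of_nat d else 0)"

definition ptraceA :: "nat \<Rightarrow> nat \<Rightarrow> complex mat \<Rightarrow> complex mat" where
  "ptraceA dA dB M = mat dB dB (\<lambda>(j, l). \<Sum>i<dA. M $$ (i*dB + j, i*dB + l))"

definition outer :: "complex vec \<Rightarrow> complex mat" where
  "outer v = mat (dim_vec v) (dim_vec v) (\<lambda>(i, j). v $ i * cnj (v $ j))"

definition schmidt_rank :: "nat \<Rightarrow> nat \<Rightarrow> complex vec \<Rightarrow> nat" where
  "schmidt_rank dA dB psi = vec_space.rank dB (ptraceA dA dB (outer psi))"

definition is_decomp :: "nat \<Rightarrow> nat \<Rightarrow> complex mat \<Rightarrow> (nat \<Rightarrow> real) \<Rightarrow> (nat \<Rightarrow> complex vec) \<Rightarrow> nat \<Rightarrow> bool" where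
  "is_decomp dA dB rho p psi m \<longleftrightarrow>
     rho \<in> carrier_mat (dA*dB) (dA*dB) \<and>
     (\<forall>k<m. p k > 0 \<and> psi k \<in> carrier_vec (dA*dB)) \<and>
     (\<forall>i<dA*dB. \<forall>j<dA*dB. rho $$ (i, j) = (\<Sum>k<m. of_real (p k) * outer (psi k) $$ (i, j)))"

definition schmidt_number :: "nat \<Rightarrow> nat \<Rightarrow> complex mat \<Rightarrow> nat" where
  "schmidt_number dA dB rho =
     Inf {Max ((\<lambda>k. schmidt_rank dA dB (psi k)) ` {..<m}) | p psi m. is_decomp dA dB rho p psi m}"

(* Z = X_{A1B1} (x) (1-omega)_{A2B2} + Y_{A1B1} (x) omega_{A2B2}, regarded as an operator
   on (A1 A2) (x) (B1 B2): A index a = a1*d2 + a2, B index b = b1*d2 + b2,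
   full index a*(d1*d2) + b. X, Y are indexed by a1*d1 + b1, omega by a2*d2 + b2. *)
definition Zop :: "nat \<Rightarrow> nat \<Rightarrow> complex mat \<Rightarrow> complex mat \<Rightarrow> complex mat" where
  "Zop d1 d2 X Y = mat ((d1*d2)*(d1*d2)) ((d1*d2)*(d1*d2)) (\<lambda>(r, c).
     let a = r div (d1*d2); b = r mod (d1*d2); a' = c div (d1*d2); b' = c mod (d1*d2);
         a1 = a div d2; a2 = a mod d2; b1 = b div d2; b2 = b mod d2;
         a1' = a' div d2; a2' = a' mod d2; b1' = b' div d2; b2' = b' mod d2;
         i1 = a1*d1 + b1; j1 = a1'*d1 + b1'; i2 = a2*d2 + b2; j2 = a2'*d2 + b2'
     in X $$ (i1, j1) * (1\<^sub>m (d2*d2) - omega d2) $$ (i2, j2) + Y $$ (i1, j1) * omega d2 $$ (i2, j2))"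

end

theory Submission
  imports Defs
begin

(* Z is positive semidefinite as a sum of tensor products of positive operators. Since
   omega^Gamma = F/d2 with F the swap, its partial transpose is
     Z^Gamma = ((d2-1) X^Gamma + Y^Gamma) (x) (1+F)/(2 d2) + ((d2+1) X^Gamma - Y^Gamma) (x) (1-F)/(2 d2),
   a sum of tensor products of positive operators by hypothesis (ii).
   For the Schmidt number, contract a decomposition Z = sum_k p_k |psi_k><psi_k| with <alpha| on
   A1B1: as <alpha|X|alpha> = 0, the contracted vectors phi_k satisfy
   sum_k p_k |phi_k><phi_k| = <alpha|Y|alpha> omega, so each phi_k is a multiple of Omega and some
   phi_k is nonzero, of Schmidt rank d2. Contracting with alpha can raise the Schmidt rank at most
   by the factor d1, hence psi_k has Schmidt rank at least d2/d1. *)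

section \<open>Positive semidefinite matrices\<close>

definition sesq :: "nat \<Rightarrow> complex mat \<Rightarrow> (nat \<Rightarrow> complex) \<Rightarrow> (nat \<Rightarrow> complex) \<Rightarrow> complex" where
  "sesq n M u w = (\<Sum>i<n. \<Sum>j<n. cnj (u i) * M $$ (i, j) * w j)"

lemma nonneg_complex_iff: "0 \<le> (z::complex) \<longleftrightarrow> Im z = 0 \<and> 0 \<le> Re z"
  by (auto simp: less_eq_complex_def)

lemma psd_iff_sesq: "psd n M \<longleftrightarrow> M \<in> carrier_mat n n \<and> (\<forall>f. 0 \<le> sesq n M f f)"
proof -
  have "qform M v = sesq n M (($) v) (($) v)" if "v \<in> carrier_vec n" for v
    using that unfolding qform_def sesq_def by auto
  moreover have "sesq n M f f = qform M (vec n f)" for f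
    unfolding qform_def sesq_def by (intro sum.cong refl) auto
  ultimately show ?thesis
    unfolding psd_def nonneg_complex_iff by (metis vec_carrier)
qed

lemma psd_sesq_nonneg: "psd n M \<Longrightarrow> 0 \<le> sesq n M f f"
  by (simp add: psd_iff_sesq)

lemma sesq_add_left: "sesq n M (\<lambda>i. u i + u' i) w = sesq n M u w + sesq n M u' w"
  unfolding sesq_def by (simp add: ring_distribs sum.distrib)

lemma sesq_add_right: "sesq n M u (\<lambda>i. w i + w' i) = sesq n M u w + sesq n M u w'"
  unfolding sesq_def by (simp add: ring_distribs sum.distrib)

lemma sesq_delta_left:
  assumes "i < n"
  shows "sesq n M (\<lambda>a. if a = i then x else 0) w = cnj x * (\<Sum>j<n. M $$ (i, j) * w j)"
proof -
  have "(\<Sum>j<n. cnj (if a = i then x else 0) * M $$ (a, j) * w j)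
      = (if a = i then cnj x * (\<Sum>j<n. M $$ (i, j) * w j) else 0)" for a
    by (auto simp: sum_distrib_left mult.assoc)
  then show ?thesis unfolding sesq_def using assms by simp
qed

lemma sesq_delta_right:
  assumes "j < n"
  shows "sesq n M u (\<lambda>a. if a = j then y else 0) = (\<Sum>i<n. cnj (u i) * M $$ (i, j)) * y"
proof -
  have "(\<Sum>b<n. cnj (u a) * M $$ (a, b) * (if b = j then y else 0)) = cnj (u a) * M $$ (a, j) * y" for a
    using assms by (simp add: if_distrib[of "\<lambda>t. _ * t"] cong: if_cong)
  then show ?thesis unfolding sesq_def by (simp add: sum_distrib_right)
qed

lemma sesq_delta_delta:
  "i < n \<Longrightarrow> j < n \<Longrightarrow>
   sesq n M (\<lambda>a. if a = i then x else 0) (\<lambda>a. if a = j then y else 0) = cnj x * M $$ (i,j) * y"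
  by (simp add: sesq_delta_left if_distrib cong: if_cong)

lemma sesq_two_point:
  assumes "i < n" "j < n"
  shows "sesq n M (\<lambda>a. (if a = i then x else 0) + (if a = j then y else 0))
                  (\<lambda>a. (if a = i then x else 0) + (if a = j then y else 0))
       = cnj x * M $$ (i,i) * x + cnj x * M $$ (i,j) * y + cnj y * M $$ (j,i) * x + cnj y * M $$ (j,j) * y"
  using assms by (simp add: sesq_add_left sesq_add_right sesq_delta_delta)

lemma psd_diag_nonneg:
  assumes "psd n M" "i < n"
  shows "0 \<le> M $$ (i,i)"
  using psd_sesq_nonneg[OF assms(1), of "\<lambda>a. if a = i then 1 else 0"]
  by (simp add: sesq_delta_delta[OF assms(2,2)])

lemma psd_hermitian:
  assumes "psd n M" "i < n" "j < n"
  shows "M $$ (i,j) = cnj (M $$ (j,i))"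
proof -
  have diag: "Im (M $$ (i,i)) = 0" "Im (M $$ (j,j)) = 0"
    using psd_diag_nonneg assms by (auto simp: nonneg_complex_iff)
  have "0 \<le> sesq n M (\<lambda>a. (if a = i then 1 else 0) + (if a = j then 1 else 0))
                       (\<lambda>a. (if a = i then 1 else 0) + (if a = j then 1 else 0))"
    by (rule psd_sesq_nonneg[OF assms(1)])
  then have "Im (M $$ (i,j)) + Im (M $$ (j,i)) = 0"
    unfolding sesq_two_point[OF assms(2,3)] nonneg_complex_iff using diag by simp
  moreover have "0 \<le> sesq n M (\<lambda>a. (if a = i then 1 else 0) + (if a = j then \<i> else 0))
                       (\<lambda>a. (if a = i then 1 else 0) + (if a = j then \<i> else 0))"
    by (rule psd_sesq_nonneg[OF assms(1)])
  then have "Re (M $$ (i,j)) - Re (M $$ (j,i)) = 0"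
    unfolding sesq_two_point[OF assms(2,3)] nonneg_complex_iff using diag by simp
  ultimately show ?thesis by (simp add: complex_eq_iff)
qed

lemma psd_zero_diag_row:
  assumes psd: "psd n M" and "i < n" "j < n" and zero: "M $$ (i,i) = 0"
  shows "M $$ (i,j) = 0"
proof (rule ccontr)
  define c where "c = M $$ (i,j)"
  assume "M $$ (i,j) \<noteq> 0"
  then have c_pos: "0 < Re c * Re c + Im c * Im c"
    unfolding c_def by (simp add: sum_squares_gt_zero_iff complex_eq_iff)
  \<comment> \<open>the test vector \<open>t e\<^sub>i + e\<^sub>j\<close> is chosen to make the form equal to \<open>-1\<close>\<close>
  define r where "r = (Re (M $$ (j,j)) + 1) / (2 * (Re c * Re c + Im c * Im c))"
  define t where "t = - (of_real r * c)"
  have "0 \<le> sesq n M (\<lambda>a. (if a = i then t else 0) + (if a = j then 1 else 0))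
                       (\<lambda>a. (if a = i then t else 0) + (if a = j then 1 else 0))"
    by (rule psd_sesq_nonneg[OF psd])
  then have nonneg: "0 \<le> cnj t * M $$ (i,j) + M $$ (j,i) * t + M $$ (j,j)"
    unfolding sesq_two_point[OF assms(2,3)] zero by simp
  have "M $$ (j,i) = cnj c" unfolding c_def using psd_hermitian[OF psd assms(3,2)] .
  then have "Re (cnj t * M $$ (i,j) + M $$ (j,i) * t + M $$ (j,j))
      = - 2 * r * (Re c * Re c + Im c * Im c) + Re (M $$ (j,j))"
    unfolding c_def[symmetric] t_def by (simp add: algebra_simps)
  also have "\<dots> = -1" unfolding r_def using c_pos by (simp add: field_simps)
  finally show False using nonneg by (simp add: nonneg_complex_iff)
qed

lemma psd_if_gram:
  fixes w :: "'k \<Rightarrow> real"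
  assumes M: "M \<in> carrier_mat n n" and K: "finite K"
    and entries: "\<And>i j. i < n \<Longrightarrow> j < n \<Longrightarrow> M $$ (i,j) = (\<Sum>k\<in>K. of_real (w k) * z k i * cnj (z k j))"
    and w: "\<And>k. k \<in> K \<Longrightarrow> w k \<ge> 0"
  shows "psd n M"
  unfolding psd_iff_sesq
proof (intro conjI allI)
  show "M \<in> carrier_mat n n" by fact
  fix f :: "nat \<Rightarrow> complex"
  define g where "g k = (\<Sum>j<n. cnj (z k j) * f j)" for k
  have "sesq n M f f = (\<Sum>i<n. \<Sum>j<n. \<Sum>k\<in>K. of_real (w k) * (cnj (f i) * z k i) * (cnj (z k j) * f j))"
    unfolding sesq_def by (intro sum.cong refl) (simp add: entries sum_distrib_left sum_distrib_right mult_ac)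
  also have "\<dots> = (\<Sum>k\<in>K. \<Sum>i<n. \<Sum>j<n. of_real (w k) * (cnj (f i) * z k i) * (cnj (z k j) * f j))"
    by (subst sum.swap) (simp add: sum.swap[where A = K])
  also have "\<dots> = (\<Sum>k\<in>K. of_real (w k) * (cnj (g k) * g k))"
    unfolding g_def by (intro sum.cong refl) (simp add: sum_distrib_left sum_distrib_right mult_ac)
  also have "\<dots> = of_real (\<Sum>k\<in>K. w k * ((Re (g k))\<^sup>2 + (Im (g k))\<^sup>2))"
    by (simp add: complex_mult_cnj mult.commute)
  finally show "0 \<le> sesq n M f f"
    using w by (simp add: less_eq_complex_def sum_nonneg del: of_real_sum)
qed

lemma psd_add: "psd n A \<Longrightarrow> psd n B \<Longrightarrow> psd n (A + B)"
  unfolding psd_iff_sesq sesq_def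
  by (auto simp: ring_distribs sum.distrib intro: add_nonneg_nonneg)

lemma psd_smult:
  assumes "psd n A" "c \<ge> 0"
  shows "psd n (of_real c \<cdot>\<^sub>m A)"
proof -
  have "A \<in> carrier_mat n n" using assms(1) psd_iff_sesq by blast
  then have "sesq n (of_real c \<cdot>\<^sub>m A) f f = of_real c * sesq n A f f" for f
    unfolding sesq_def by (simp add: sum_distrib_left mult_ac)
  moreover have "0 \<le> (of_real c :: complex)" using assms(2) by (simp add: less_eq_complex_def)
  ultimately show ?thesis
    using assms(1) \<open>A \<in> carrier_mat n n\<close> by (simp add: psd_iff_sesq psd_sesq_nonneg)
qed

lemma psd_schur_complement:
  assumes psd: "psd n M" and i0: "i0 < n" and mu: "M $$ (i0,i0) = of_real \<mu>" "\<mu> > 0"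
  shows "psd n (mat n n (\<lambda>(i,j). M $$ (i,j) - M $$ (i,i0) * M $$ (i0,j) / of_real \<mu>))"
    (is "psd n ?M'")
  unfolding psd_iff_sesq
proof (intro conjI allI)
  show "?M' \<in> carrier_mat n n" by simp
  fix f :: "nat \<Rightarrow> complex"
  define \<beta> where "\<beta> = (\<Sum>j<n. M $$ (i0,j) * f j)"
  define \<gamma> where "\<gamma> = (\<Sum>i<n. cnj (f i) * M $$ (i,i0))"
  define t where "t = - \<beta> / of_real \<mu>"
  define e where "e = (\<lambda>a::nat. if a = i0 then t else 0)"
  have "\<gamma> = cnj \<beta>" unfolding \<gamma>_def \<beta>_def cnj_sum
    by (intro sum.cong refl) (simp add: psd_hermitian[OF psd _ i0] mult.commute)
  have "sesq n ?M' f f = sesq n M f f - \<gamma> * \<beta> / of_real \<mu>"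
  proof -
    have "sesq n ?M' f f = (\<Sum>i<n. \<Sum>j<n. cnj (f i) * M $$ (i,j) * f j
        - (cnj (f i) * M $$ (i,i0)) * (M $$ (i0,j) * f j) / of_real \<mu>)"
      unfolding sesq_def by (intro sum.cong refl) (simp add: algebra_simps)
    also have "\<dots> = sesq n M f f - \<gamma> * \<beta> / of_real \<mu>"
      unfolding sesq_def \<gamma>_def \<beta>_def by (simp add: sum_subtractf sum_divide_distrib sum_product)
    finally show ?thesis .
  qed
  \<comment> \<open>the correction term is the form of \<open>M\<close> at the shifted vector \<open>f + t e\<^sub>i\<^sub>0\<close>\<close>
  also have "\<dots> = sesq n M (\<lambda>a. f a + e a) (\<lambda>a. f a + e a)"
  proof -
    have "sesq n M f e = \<gamma> * t" unfolding e_def \<gamma>_def by (rule sesq_delta_right[OF i0])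
    moreover have "sesq n M e f = cnj t * \<beta>" unfolding e_def \<beta>_def by (rule sesq_delta_left[OF i0])
    moreover have "sesq n M e e = cnj t * M $$ (i0,i0) * t" unfolding e_def by (rule sesq_delta_delta[OF i0 i0])
    ultimately have "sesq n M (\<lambda>a. f a + e a) (\<lambda>a. f a + e a)
        = sesq n M f f + (\<gamma> * t + (cnj t * \<beta> + cnj t * M $$ (i0,i0) * t))"
      by (simp only: sesq_add_left sesq_add_right add.assoc)
    moreover have "(of_real \<mu> :: complex) \<noteq> 0" using mu(2) by simp
    ultimately show ?thesis
      unfolding t_def mu(1) \<open>\<gamma> = cnj \<beta>\<close> by (simp add: field_simps)
  qed
  finally show "0 \<le> sesq n ?M' f f" using psd_sesq_nonneg[OF psd] by simp
qed

lemma psd_gram_decomposition: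
  assumes "psd n M"
  shows "\<exists>(m::nat) z. \<forall>i<n. \<forall>j<n. M $$ (i,j) = (\<Sum>k<m. z k i * cnj (z k j))"
  using assms
proof (induction "card {i. i < n \<and> M $$ (i,i) \<noteq> 0}" arbitrary: M rule: less_induct)
  case less
  note psd = \<open>psd n M\<close>
  show ?case
  proof (cases "\<exists>i0<n. M $$ (i0,i0) \<noteq> 0")
    case False
    then have "\<forall>i<n. \<forall>j<n. M $$ (i,j) = 0" using psd_zero_diag_row[OF psd] by auto
    then show ?thesis by (intro exI[of _ 0]) simp
  next
    case True
    then obtain i0 where i0: "i0 < n" "M $$ (i0,i0) \<noteq> 0" by auto
    define \<mu> where "\<mu> = Re (M $$ (i0,i0))"
    have mu: "M $$ (i0,i0) = of_real \<mu>" "\<mu> > 0"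
      using psd_diag_nonneg[OF psd i0(1)] i0(2) unfolding \<mu>_def
      by (auto simp: nonneg_complex_iff complex_eq_iff)
    define M' where "M' = mat n n (\<lambda>(i,j). M $$ (i,j) - M $$ (i,i0) * M $$ (i0,j) / of_real \<mu>)"
    have psd': "psd n M'" unfolding M'_def by (rule psd_schur_complement[OF psd i0(1) mu])
    have "{i. i < n \<and> M' $$ (i,i) \<noteq> 0} \<subseteq> {i. i < n \<and> M $$ (i,i) \<noteq> 0} - {i0}"
    proof
      fix i assume i: "i \<in> {i. i < n \<and> M' $$ (i,i) \<noteq> 0}"
      then have "i \<noteq> i0" using mu unfolding M'_def by auto
      moreover have "M $$ (i,i) \<noteq> 0"
        using i psd_zero_diag_row[OF psd _ i0(1)] unfolding M'_def by fastforce
      ultimately show "i \<in> {i. i < n \<and> M $$ (i,i) \<noteq> 0} - {i0}" using i by auto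
    qed
    then have "card {i. i < n \<and> M' $$ (i,i) \<noteq> 0} \<le> card ({i. i < n \<and> M $$ (i,i) \<noteq> 0} - {i0})"
      by (intro card_mono) auto
    also have "\<dots> < card {i. i < n \<and> M $$ (i,i) \<noteq> 0}"
      using i0 by (intro card_Diff1_less) auto
    finally have "card {i. i < n \<and> M' $$ (i,i) \<noteq> 0} < card {i. i < n \<and> M $$ (i,i) \<noteq> 0}" .
    then obtain m :: nat and z where z: "\<forall>i<n. \<forall>j<n. M' $$ (i,j) = (\<Sum>k<m. z k i * cnj (z k j))"
      using less.hyps psd' by blast
    define s where "s = (of_real (sqrt \<mu>) :: complex)"
    have s: "s * s = of_real \<mu>" "cnj s = s"
      unfolding s_def using mu(2) by (metis abs_of_pos of_real_mult real_sqrt_mult_self) simp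
    \<comment> \<open>the eliminated rank-one term becomes one more Gram vector\<close>
    define z' where "z' k = (if k < m then z k else (\<lambda>i. M $$ (i,i0) / s))" for k
    have "M $$ (i,j) = (\<Sum>k<Suc m. z' k i * cnj (z' k j))" if ij: "i < n" "j < n" for i j
    proof -
      have "z' m i * cnj (z' m j) = M $$ (i,i0) * M $$ (i0,j) / of_real \<mu>"
        using psd_hermitian[OF psd i0(1) ij(2)] s by (simp add: z'_def)
      moreover have "(\<Sum>k<m. z' k i * cnj (z' k j)) = M' $$ (i,j)"
        using z ij by (simp add: z'_def)
      ultimately show ?thesis using ij by (simp add: M'_def)
    qed
    then show ?thesis by blast
  qed
qed

section \<open>Tensor products of operators\<close>

lemma mult_add_less: "(a::nat) < n \<Longrightarrow> b < m \<Longrightarrow> a * m + b < n * m"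
proof -
  assume "a < n" "b < m"
  then have "a * m + b < (a + 1) * m" by simp
  also have "\<dots> \<le> n * m" using \<open>a < n\<close> by (intro mult_right_mono) auto
  finally show ?thesis .
qed

lemma mult_add_div_eq: "(b::nat) < d \<Longrightarrow> (a * d + b) div d = a"
  and mult_add_mod_eq: "(b::nat) < d \<Longrightarrow> (a * d + b) mod d = b"
  by auto

lemma sum_lessThan_mult: "(\<Sum>i<n*m. f i) = (\<Sum>a<n. \<Sum>b<m. f (a*m + b :: nat))"
proof (induction n)
  case (Suc n)
  have "(\<Sum>i<Suc n * m. f i) = (\<Sum>i<n*m. f i) + (\<Sum>i\<in>{n*m..<n*m+m}. f i)"
    by (simp add: lessThan_atLeast0 sum.atLeastLessThan_concat add.commute)
  also have "(\<Sum>i\<in>{n*m..<n*m+m}. f i) = (\<Sum>b<m. f (n*m + b))"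
    using sum.shift_bounds_nat_ivl[of f 0 "n*m" m] by (simp add: lessThan_atLeast0 add.commute)
  finally show ?case using Suc by (simp add: add.commute)
qed simp

text \<open>\<open>tensor_op d1 d2 A B\<close> is \<open>A\<^sub>A\<^sub>1\<^sub>B\<^sub>1 \<otimes> B\<^sub>A\<^sub>2\<^sub>B\<^sub>2\<close> regrouped as an operator on
  \<open>(A\<^sub>1A\<^sub>2) \<otimes> (B\<^sub>1B\<^sub>2)\<close>, with the index conventions of \<open>Zop\<close>: \<open>idx1\<close> and \<open>idx2\<close>
  extract the \<open>A\<^sub>1B\<^sub>1\<close>- and \<open>A\<^sub>2B\<^sub>2\<close>-indices of a full index, and \<open>tensor_idx\<close> inverts them.\<close>

definition idx1 :: "nat \<Rightarrow> nat \<Rightarrow> nat \<Rightarrow> nat" where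
  "idx1 d1 d2 r = (r div (d1*d2) div d2) * d1 + (r mod (d1*d2) div d2)"

definition idx2 :: "nat \<Rightarrow> nat \<Rightarrow> nat \<Rightarrow> nat" where
  "idx2 d1 d2 r = (r div (d1*d2) mod d2) * d2 + (r mod (d1*d2) mod d2)"

definition tensor_idx :: "nat \<Rightarrow> nat \<Rightarrow> nat \<Rightarrow> nat \<Rightarrow> nat" where
  "tensor_idx d1 d2 i1 i2 = ((i1 div d1) * d2 + i2 div d2) * (d1*d2) + ((i1 mod d1) * d2 + i2 mod d2)"

definition tensor_op :: "nat \<Rightarrow> nat \<Rightarrow> complex mat \<Rightarrow> complex mat \<Rightarrow> complex mat" where
  "tensor_op d1 d2 A B = mat ((d1*d2)*(d1*d2)) ((d1*d2)*(d1*d2))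
     (\<lambda>(r,c). A $$ (idx1 d1 d2 r, idx1 d1 d2 c) * B $$ (idx2 d1 d2 r, idx2 d1 d2 c))"

lemma idx_less:
  assumes "r < (d1*d2)*(d1*d2)"
  shows "idx1 d1 d2 r < d1*d1" "idx2 d1 d2 r < d2*d2"
proof -
  have "d1*d2 > 0" using assms by (cases "d1*d2 = 0") auto
  then have "r div (d1*d2) < d1*d2" "r mod (d1*d2) < d1*d2" "d2 > 0"
    using assms by (auto simp: less_mult_imp_div_less)
  then show "idx1 d1 d2 r < d1*d1" "idx2 d1 d2 r < d2*d2"
    unfolding idx1_def idx2_def by (auto intro!: mult_add_less simp: less_mult_imp_div_less)
qed

lemma tensor_idx:
  assumes "i1 < d1*d1" "i2 < d2*d2"
  shows "tensor_idx d1 d2 i1 i2 < (d1*d2)*(d1*d2)"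
    and "idx1 d1 d2 (tensor_idx d1 d2 i1 i2) = i1" "idx2 d1 d2 (tensor_idx d1 d2 i1 i2) = i2"
proof -
  have "d1 > 0" "d2 > 0" using assms by (auto intro: ccontr)
  then have l: "i1 div d1 < d1" "i1 mod d1 < d1" "i2 div d2 < d2" "i2 mod d2 < d2"
    using assms by (auto simp: less_mult_imp_div_less)
  then have A: "(i1 div d1) * d2 + i2 div d2 < d1*d2" and B: "(i1 mod d1) * d2 + i2 mod d2 < d1*d2"
    by (auto intro: mult_add_less)
  show "tensor_idx d1 d2 i1 i2 < (d1*d2)*(d1*d2)"
    unfolding tensor_idx_def by (rule mult_add_less[OF A B])
  show "idx1 d1 d2 (tensor_idx d1 d2 i1 i2) = i1" "idx2 d1 d2 (tensor_idx d1 d2 i1 i2) = i2"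
    unfolding idx1_def idx2_def tensor_idx_def using B l by (simp_all add: mult_add_div_eq mult_add_mod_eq)
qed

lemma tensor_idx_split:
  "a1 < d1 \<Longrightarrow> b1 < d1 \<Longrightarrow> a2 < d2 \<Longrightarrow> b2 < d2 \<Longrightarrow>
   tensor_idx d1 d2 (a1*d1 + b1) (a2*d2 + b2) = (a1*d2 + a2) * (d1*d2) + (b1*d2 + b2)"
  unfolding tensor_idx_def by (simp add: mult_add_div_eq mult_add_mod_eq)

lemma tensor_op_carrier: "tensor_op d1 d2 A B \<in> carrier_mat ((d1*d2)*(d1*d2)) ((d1*d2)*(d1*d2))"
  unfolding tensor_op_def by simp

lemma Zop_eq_tensor_op:
  "Zop d1 d2 X Y = tensor_op d1 d2 X (1\<^sub>m (d2*d2) - omega d2) + tensor_op d1 d2 Y (omega d2)"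
  by (rule eq_matI) (auto simp: Zop_def tensor_op_def Let_def idx1_def idx2_def)

lemma psd_tensor_op:
  assumes A: "psd (d1*d1) A" and B: "psd (d2*d2) B"
  shows "psd ((d1*d2)*(d1*d2)) (tensor_op d1 d2 A B)"
proof -
  obtain m1 :: nat and x where x: "\<forall>i<d1*d1. \<forall>j<d1*d1. A $$ (i,j) = (\<Sum>k<m1. x k i * cnj (x k j))"
    using psd_gram_decomposition[OF A] by blast
  obtain m2 :: nat and y where y: "\<forall>i<d2*d2. \<forall>j<d2*d2. B $$ (i,j) = (\<Sum>l<m2. y l i * cnj (y l j))"
    using psd_gram_decomposition[OF B] by blast
  define z where "z = (\<lambda>(k,l) r. x k (idx1 d1 d2 r) * y l (idx2 d1 d2 r))"
  show ?thesis
  proof (rule psd_if_gram[where K = "{..<m1} \<times> {..<m2}" and w = "\<lambda>_. 1" and z = z])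
    fix r c assume rc: "r < (d1*d2)*(d1*d2)" "c < (d1*d2)*(d1*d2)"
    have "tensor_op d1 d2 A B $$ (r,c)
        = (\<Sum>k<m1. x k (idx1 d1 d2 r) * cnj (x k (idx1 d1 d2 c)))
        * (\<Sum>l<m2. y l (idx2 d1 d2 r) * cnj (y l (idx2 d1 d2 c)))"
      using x y idx_less[OF rc(1)] idx_less[OF rc(2)] rc by (simp add: tensor_op_def)
    also have "\<dots> = (\<Sum>kl\<in>{..<m1} \<times> {..<m2}. of_real 1 * z kl r * cnj (z kl c))"
      unfolding sum_product sum.cartesian_product z_def by (intro sum.cong refl) (auto simp: mult_ac)
    finally show "tensor_op d1 d2 A B $$ (r,c) = (\<Sum>kl\<in>{..<m1} \<times> {..<m2}. of_real 1 * z kl r * cnj (z kl c))" .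
  qed (auto simp: tensor_op_carrier)
qed

lemma ptrans_entry:
  "r < dA*dB \<Longrightarrow> c < dA*dB \<Longrightarrow>
   ptrans dA dB W $$ (r,c) = W $$ ((r div dB) * dB + c mod dB, (c div dB) * dB + r mod dB)"
  unfolding ptrans_def by simp

lemma ptrans_add:
  assumes "A \<in> carrier_mat (dA*dB) (dA*dB)" "B \<in> carrier_mat (dA*dB) (dA*dB)"
  shows "ptrans dA dB (A + B) = ptrans dA dB A + ptrans dA dB B"
proof (rule eq_matI)
  fix r c assume "r < dim_row (ptrans dA dB A + ptrans dA dB B)" "c < dim_col (ptrans dA dB A + ptrans dA dB B)"
  then have rc: "r < dA*dB" "c < dA*dB" by (auto simp: ptrans_def)
  then have "dB > 0" by (cases "dB = 0") auto
  then have "(r div dB) * dB + c mod dB < dA*dB" "(c div dB) * dB + r mod dB < dA*dB"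
    using rc by (auto intro!: mult_add_less simp: less_mult_imp_div_less)
  then show "ptrans dA dB (A + B) $$ (r,c) = (ptrans dA dB A + ptrans dA dB B) $$ (r,c)"
    using rc assms by (simp add: ptrans_entry ptrans_def)
qed (auto simp: ptrans_def)

lemma ptrans_tensor_op:
  assumes "d1 \<ge> 1" "d2 \<ge> 1"
  shows "ptrans (d1*d2) (d1*d2) (tensor_op d1 d2 A B) = tensor_op d1 d2 (ptrans d1 d1 A) (ptrans d2 d2 B)"
proof (rule eq_matI)
  define D where "D = d1*d2"
  have D0: "d1 > 0" "d2 > 0" using assms by auto
  fix r c
  assume "r < dim_row (tensor_op d1 d2 (ptrans d1 d1 A) (ptrans d2 d2 B))"
    "c < dim_col (tensor_op d1 d2 (ptrans d1 d1 A) (ptrans d2 d2 B))"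
  then have rc: "r < D*D" "c < D*D" unfolding tensor_op_def D_def by auto
  have mD: "r mod D < D" "c mod D < D" using D0 unfolding D_def by auto
  define r' where "r' = (r div D) * D + c mod D"
  define c' where "c' = (c div D) * D + r mod D"
  have r'lt: "r' < D*D" "c' < D*D"
    unfolding r'_def c'_def using rc mD by (auto intro!: mult_add_less simp: less_mult_imp_div_less)
  have r'dm: "r' div D = r div D" "r' mod D = c mod D" "c' div D = c div D" "c' mod D = r mod D"
    unfolding r'_def c'_def using mD by (auto simp: mult_add_div_eq mult_add_mod_eq)
  have "x mod D div d2 < d1" for x using D0 unfolding D_def by (auto simp: less_mult_imp_div_less)
  then have idx1_dm: "idx1 d1 d2 x div d1 = x div D div d2" "idx1 d1 d2 x mod d1 = x mod D div d2" for x
    unfolding idx1_def D_def[symmetric] by (auto simp: mult_add_div_eq mult_add_mod_eq)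
  have idx2_dm: "idx2 d1 d2 x div d2 = x div D mod d2" "idx2 d1 d2 x mod d2 = x mod D mod d2" for x
    unfolding idx2_def D_def[symmetric] using D0 by (auto simp: mult_add_div_eq mult_add_mod_eq)
  have idx1_swap: "idx1 d1 d2 r' = (idx1 d1 d2 r div d1) * d1 + idx1 d1 d2 c mod d1"
    "idx1 d1 d2 c' = (idx1 d1 d2 c div d1) * d1 + idx1 d1 d2 r mod d1"
    unfolding idx1_dm unfolding idx1_def D_def[symmetric] r'dm by simp_all
  have idx2_swap: "idx2 d1 d2 r' = (idx2 d1 d2 r div d2) * d2 + idx2 d1 d2 c mod d2"
    "idx2 d1 d2 c' = (idx2 d1 d2 c div d2) * d2 + idx2 d1 d2 r mod d2"
    unfolding idx2_dm unfolding idx2_def D_def[symmetric] r'dm by simp_all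
  have "ptrans D D (tensor_op d1 d2 A B) $$ (r,c) = tensor_op d1 d2 A B $$ (r', c')"
    unfolding r'_def c'_def using rc by (simp add: ptrans_entry)
  also have "\<dots> = A $$ (idx1 d1 d2 r', idx1 d1 d2 c') * B $$ (idx2 d1 d2 r', idx2 d1 d2 c')"
    unfolding tensor_op_def using r'lt unfolding D_def by simp
  also have "\<dots> = tensor_op d1 d2 (ptrans d1 d1 A) (ptrans d2 d2 B) $$ (r,c)"
    unfolding idx1_swap idx2_swap using rc idx_less[of r d1 d2] idx_less[of c d1 d2]
    unfolding D_def by (simp add: ptrans_entry tensor_op_def)
  finally show "ptrans (d1*d2) (d1*d2) (tensor_op d1 d2 A B) $$ (r,c)
      = tensor_op d1 d2 (ptrans d1 d1 A) (ptrans d2 d2 B) $$ (r,c)" unfolding D_def .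
qed (auto simp: ptrans_def tensor_op_def)

section \<open>Positivity and partial transpose of \<open>Z\<close>\<close>

lemma omega_entry:
  "i < d*d \<Longrightarrow> j < d*d \<Longrightarrow>
   omega d $$ (i,j) = (if i div d = i mod d \<and> j div d = j mod d then 1 / of_nat d else 0)"
  unfolding omega_def by simp

lemma omega_carrier: "omega d \<in> carrier_mat (d*d) (d*d)"
  unfolding omega_def by simp

lemma psd_omega: "psd (d*d) (omega d)"
proof -
  define s where "s = (of_real (sqrt (real d)) :: complex)"
  have s: "s * s = of_nat d" "cnj s = s"
    unfolding s_def by (simp_all flip: of_real_mult)
  show ?thesis
  proof (rule psd_if_gram[where K = "{()}" and w = "\<lambda>_. 1"
        and z = "\<lambda>_ i. of_bool (i div d = i mod d) / s"])
    fix i j assume "i < d*d" "j < d*d"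
    then show "omega d $$ (i,j) = (\<Sum>k\<in>{()}. of_real 1 * (of_bool (i div d = i mod d) / s)
                                               * cnj (of_bool (j div d = j mod d) / s))"
      using s by (simp add: omega_entry)
  qed (auto simp: omega_carrier)
qed

lemma square_sum_le_card_mult_sum_squares:
  fixes a :: "'a \<Rightarrow> real"
  assumes "finite T"
  shows "(\<Sum>i\<in>T. a i)\<^sup>2 \<le> real (card T) * (\<Sum>i\<in>T. (a i)\<^sup>2)"
proof -
  have "0 \<le> (\<Sum>i\<in>T. \<Sum>j\<in>T. (a i - a j)\<^sup>2)" by (intro sum_nonneg) auto
  also have "\<dots> = (\<Sum>i\<in>T. \<Sum>j\<in>T. (a i)\<^sup>2 + (a j)\<^sup>2 - 2 * (a i * a j))"
    by (intro sum.cong refl) (simp add: power2_diff)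
  also have "\<dots> = 2 * (real (card T) * (\<Sum>i\<in>T. (a i)\<^sup>2)) - 2 * (\<Sum>i\<in>T. a i)\<^sup>2"
    by (simp add: sum.distrib sum_subtractf sum_distrib_left[symmetric] power2_eq_square
        sum_product sum_distrib_right)
  finally show ?thesis by simp
qed

lemma sesq_one_mat: "sesq n (1\<^sub>m n) u w = (\<Sum>i<n. cnj (u i) * w i)"
  unfolding sesq_def
proof (intro sum.cong refl)
  fix i assume "i \<in> {..<n}"
  then have "(\<Sum>j<n. cnj (u i) * 1\<^sub>m n $$ (i,j) * w j) = (\<Sum>j<n. if i = j then cnj (u i) * w j else 0)"
    by (intro sum.cong refl) auto
  then show "(\<Sum>j<n. cnj (u i) * 1\<^sub>m n $$ (i,j) * w j) = cnj (u i) * w i"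
    using \<open>i \<in> {..<n}\<close> by simp
qed

lemma cnj_mult_self_eq_norm_square: "cnj z * z = of_real ((cmod z)\<^sup>2)"
  by (metis complex_norm_square mult.commute)

lemma psd_one_minus_omega:
  assumes "d \<ge> 1"
  shows "psd (d*d) (1\<^sub>m (d*d) - omega d)"
  unfolding psd_iff_sesq
proof (intro conjI allI)
  show "1\<^sub>m (d*d) - omega d \<in> carrier_mat (d*d) (d*d)"
    by (rule minus_carrier_mat[OF omega_carrier])
  fix f :: "nat \<Rightarrow> complex"
  define Dg where "Dg = {j\<in>{..<d*d}. j div d = j mod d}"
  define T where "T = (\<Sum>j\<in>Dg. f j)"
  have "sesq (d*d) (1\<^sub>m (d*d) - omega d) f f = sesq (d*d) (1\<^sub>m (d*d)) f f - sesq (d*d) (omega d) f f"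
    unfolding sesq_def sum_subtractf[symmetric]
    by (intro sum.cong refl) (auto simp: omega_def algebra_simps)
  also have "sesq (d*d) (1\<^sub>m (d*d)) f f = (\<Sum>i<d*d. cnj (f i) * f i)"
    by (rule sesq_one_mat)
  also have "sesq (d*d) (omega d) f f = cnj T * T / of_nat d"
  proof -
    have "sesq (d*d) (omega d) f f = (\<Sum>i<d*d. if i div d = i mod d then
        (\<Sum>j<d*d. if j div d = j mod d then cnj (f i) * f j / of_nat d else 0) else 0)"
      unfolding sesq_def by (intro sum.cong refl) (auto simp: omega_entry intro!: sum.cong)
    also have "\<dots> = (\<Sum>i\<in>Dg. \<Sum>j\<in>Dg. cnj (f i) * f j / of_nat d)"
      unfolding Dg_def by (simp only: sum.inter_filter[OF finite_lessThan])
    finally show ?thesis unfolding T_def cnj_sum by (simp add: sum_product sum_divide_distrib)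
  qed
  also have "(\<Sum>i<d*d. cnj (f i) * f i) - cnj T * T / of_nat d
      = of_real ((\<Sum>i<d*d. (cmod (f i))\<^sup>2) - (cmod T)\<^sup>2 / real d)"
    unfolding cnj_mult_self_eq_norm_square by simp
  finally have form: "sesq (d*d) (1\<^sub>m (d*d) - omega d) f f
      = of_real ((\<Sum>i<d*d. (cmod (f i))\<^sup>2) - (cmod T)\<^sup>2 / real d)" .
  \<comment> \<open>\<open>\<Omega>\<close> has only \<open>d\<close> nonzero coordinates, so by Cauchy-Schwarz \<open>|T|\<^sup>2 \<le> d \<parallel>f\<parallel>\<^sup>2\<close>\<close>
  have "Dg \<subseteq> (\<lambda>k. k*d + k) ` {..<d}"
  proof
    fix j assume "j \<in> Dg"
    then have j: "j < d*d" "j div d = j mod d" unfolding Dg_def by auto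
    have "j = (j div d) * d + j div d" using j(2) div_mult_mod_eq[of j d] by simp
    moreover have "j div d < d" using j(1) by (simp add: less_mult_imp_div_less)
    ultimately show "j \<in> (\<lambda>k. k*d + k) ` {..<d}" by (intro rev_image_eqI[of "j div d"]) auto
  qed
  then have "card Dg \<le> card ((\<lambda>k. k*d + k) ` {..<d})" by (intro card_mono) auto
  also have "\<dots> \<le> d" using card_image_le[of "{..<d}" "\<lambda>k. k*d + k"] by simp
  finally have "card Dg \<le> d" .
  have "(cmod T)\<^sup>2 \<le> (\<Sum>j\<in>Dg. cmod (f j))\<^sup>2" unfolding T_def by (intro power_mono norm_sum) auto
  also have "\<dots> \<le> real (card Dg) * (\<Sum>j\<in>Dg. (cmod (f j))\<^sup>2)"
    by (rule square_sum_le_card_mult_sum_squares) (simp add: Dg_def)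
  also have "\<dots> \<le> real d * (\<Sum>i<d*d. (cmod (f i))\<^sup>2)"
    by (intro mult_mono sum_mono2) (use \<open>card Dg \<le> d\<close> in \<open>auto simp: Dg_def intro: sum_nonneg\<close>)
  finally have "(cmod T)\<^sup>2 / real d \<le> (\<Sum>i<d*d. (cmod (f i))\<^sup>2)"
    using assms by (simp add: field_simps)
  then show "0 \<le> sesq (d*d) (1\<^sub>m (d*d) - omega d) f f"
    unfolding form by (simp add: less_eq_complex_def)
qed

lemma psd_Zop:
  assumes "d2 \<ge> 1" "psd (d1*d1) X" "psd (d1*d1) Y"
  shows "psd ((d1*d2)*(d1*d2)) (Zop d1 d2 X Y)"
  unfolding Zop_eq_tensor_op
  using assms by (intro psd_add psd_tensor_op psd_omega psd_one_minus_omega)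

text \<open>\<open>swapped d i j\<close> says that the basis vectors \<open>i\<close> and \<open>j\<close> of \<open>\<complex>\<^sup>d \<otimes> \<complex>\<^sup>d\<close> are exchanged
  by the swap operator \<open>F\<close>; \<open>swap_proj 1 d\<close> and \<open>swap_proj (-1) d\<close> are the projectors
  \<open>(1 \<plusminus> F)/2\<close> onto the symmetric and antisymmetric subspaces.\<close>

definition swapped :: "nat \<Rightarrow> nat \<Rightarrow> nat \<Rightarrow> bool" where
  "swapped d i j \<longleftrightarrow> i div d = j mod d \<and> i mod d = j div d"

definition swap_proj :: "complex \<Rightarrow> nat \<Rightarrow> complex mat" where
  "swap_proj s d = mat (d*d) (d*d) (\<lambda>(i,j). (of_bool (i = j) + s * of_bool (swapped d i j)) / 2)"

lemma sum_of_bool_eq_mult: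
  assumes "finite A" "p \<in> A"
  shows "(\<Sum>x\<in>A. of_bool (x = p) * of_bool (x = q)) = (of_bool (p = q) :: complex)"
proof -
  have "(\<Sum>x\<in>A. of_bool (x = p) * of_bool (x = q)) = (\<Sum>x\<in>A. if x = p then of_bool (p = q) else 0 :: complex)"
    by (intro sum.cong refl) auto
  then show ?thesis using assms by simp
qed

lemma psd_swap_proj:
  assumes "s = 1 \<or> s = -1"
  shows "psd (d*d) (swap_proj s d)"
proof -
  define B where "B = {..<d} \<times> {..<d}"
  have "finite B" unfolding B_def by simp
  have mem: "(i div d, i mod d) \<in> B" "(i mod d, i div d) \<in> B" if "i < d*d" for i
  proof -
    have "d > 0" using that by (cases d) auto
    then show "(i div d, i mod d) \<in> B" "(i mod d, i div d) \<in> B"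
      using that unfolding B_def by (auto simp: less_mult_imp_div_less)
  qed
  \<comment> \<open>\<open>e\<^sub>i\<close> and \<open>F e\<^sub>i\<close> as coordinate functions on \<open>B\<close>\<close>
  define u where "u i x = (of_bool (x = (i div d, i mod d)) :: complex)" for i x
  define v where "v i x = (of_bool (x = (i mod d, i div d)) :: complex)" for i x
  have pair_eq: "((i div d, i mod d) = (j div d, j mod d)) = (i = j)" for i j :: nat
    by (metis div_mult_mod_eq prod.inject)
  have uu: "(\<Sum>x\<in>B. u i x * u j x) = of_bool (i = j)"
    and uv: "(\<Sum>x\<in>B. u i x * v j x) = of_bool (swapped d i j)"
    and vu: "(\<Sum>x\<in>B. v i x * u j x) = of_bool (swapped d i j)"
    and vv: "(\<Sum>x\<in>B. v i x * v j x) = of_bool (i = j)" if "i < d*d" for i j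
    unfolding u_def v_def using sum_of_bool_eq_mult[OF \<open>finite B\<close> mem(1)[OF that]]
      sum_of_bool_eq_mult[OF \<open>finite B\<close> mem(2)[OF that]] pair_eq[of i j]
    by (auto simp: swapped_def)
  have s: "cnj s = s" "s * s = 1" using assms by auto
  have cnj_uv: "cnj (u i x) = u i x" "cnj (v i x) = v i x" for i x unfolding u_def v_def by simp_all
  show ?thesis
  proof (rule psd_if_gram[where K = B and w = "\<lambda>_. 1" and z = "\<lambda>x i. (u i x + s * v i x) / 2"])
    fix i j assume ij: "i < d*d" "j < d*d"
    have pointwise: "of_real 1 * ((u i x + s * v i x) / 2) * cnj ((u j x + s * v j x) / 2)
        = (u i x * u j x + s * (u i x * v j x) + s * (v i x * u j x) + (s * s) * (v i x * v j x)) / 4" for x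
      by (simp add: s(1) cnj_uv field_simps)
    have "(\<Sum>x\<in>B. of_real 1 * ((u i x + s * v i x) / 2) * cnj ((u j x + s * v j x) / 2))
       = ((\<Sum>x\<in>B. u i x * u j x) + s * (\<Sum>x\<in>B. u i x * v j x) + s * (\<Sum>x\<in>B. v i x * u j x)
          + (s * s) * (\<Sum>x\<in>B. v i x * v j x)) / 4"
      by (simp only: pointwise sum_divide_distrib[symmetric] sum.distrib sum_distrib_left[symmetric])
    also have "\<dots> = (of_bool (i = j) + s * of_bool (swapped d i j)) / 2"
      using ij by (simp add: uu uv vu vv s)
    finally show "swap_proj s d $$ (i,j)
        = (\<Sum>x\<in>B. of_real 1 * ((u i x + s * v i x) / 2) * cnj ((u j x + s * v j x) / 2))"
      using ij unfolding swap_proj_def by simp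
  qed (auto simp: swap_proj_def \<open>finite B\<close>)
qed

lemma ptrans_omega_entry:
  assumes "i < d*d" "j < d*d"
  shows "ptrans d d (omega d) $$ (i,j) = of_bool (swapped d i j) / of_nat d"
    and "ptrans d d (1\<^sub>m (d*d) - omega d) $$ (i,j) = of_bool (i = j) - of_bool (swapped d i j) / of_nat d"
proof -
  have "d > 0" using assms by (cases d) auto
  then have lt: "i div d < d" "j div d < d" "i mod d < d" "j mod d < d"
    using assms by (auto simp: less_mult_imp_div_less)
  then have x: "(i div d) * d + j mod d < d*d" "(j div d) * d + i mod d < d*d"
    by (auto intro: mult_add_less)
  have "((i div d) * d + j mod d = (j div d) * d + i mod d) = (i div d = j div d \<and> j mod d = i mod d)"
    using lt(3,4) by (metis mult_add_div_eq mult_add_mod_eq)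
  also have "\<dots> = (i = j)" by (metis div_mult_mod_eq)
  finally have "((i div d) * d + j mod d = (j div d) * d + i mod d) = (i = j)" .
  moreover have "(i div d = j mod d \<and> j div d = i mod d) = swapped d i j"
    unfolding swapped_def by auto
  ultimately show "ptrans d d (omega d) $$ (i,j) = of_bool (swapped d i j) / of_nat d"
    and "ptrans d d (1\<^sub>m (d*d) - omega d) $$ (i,j) = of_bool (i = j) - of_bool (swapped d i j) / of_nat d"
    using assms x lt unfolding ptrans_entry[OF assms]
    by (simp_all add: omega_def mult_add_div_eq mult_add_mod_eq)
qed

lemma ptrans_Zop:
  assumes "d1 \<ge> 1" "d2 \<ge> 1"
  shows "ptrans (d1*d2) (d1*d2) (Zop d1 d2 X Y)
       = of_real (1 / real d2) \<cdot>\<^sub>m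
         (tensor_op d1 d2 ((of_nat d2 - 1) \<cdot>\<^sub>m ptrans d1 d1 X - - ptrans d1 d1 Y) (swap_proj 1 d2)
        + tensor_op d1 d2 ((of_nat d2 + 1) \<cdot>\<^sub>m ptrans d1 d1 X - ptrans d1 d1 Y) (swap_proj (-1) d2))"
  (is "_ = ?R")
proof (rule eq_matI)
  fix r c assume "r < dim_row ?R" "c < dim_col ?R"
  then have rc: "r < (d1*d2)*(d1*d2)" "c < (d1*d2)*(d1*d2)" by (auto simp: tensor_op_def)
  have idx: "idx1 d1 d2 r < d1*d1" "idx1 d1 d2 c < d1*d1" "idx2 d1 d2 r < d2*d2" "idx2 d1 d2 c < d2*d2"
    using idx_less rc by auto
  define x where "x = ptrans d1 d1 X $$ (idx1 d1 d2 r, idx1 d1 d2 c)"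
  define y where "y = ptrans d1 d1 Y $$ (idx1 d1 d2 r, idx1 d1 d2 c)"
  define e where "e = (of_bool (idx2 d1 d2 r = idx2 d1 d2 c) :: complex)"
  define f where "f = (of_bool (swapped d2 (idx2 d1 d2 r) (idx2 d1 d2 c)) :: complex)"
  have "ptrans (d1*d2) (d1*d2) (Zop d1 d2 X Y)
      = tensor_op d1 d2 (ptrans d1 d1 X) (ptrans d2 d2 (1\<^sub>m (d2*d2) - omega d2))
      + tensor_op d1 d2 (ptrans d1 d1 Y) (ptrans d2 d2 (omega d2))"
    unfolding Zop_eq_tensor_op
    by (simp add: ptrans_add[OF tensor_op_carrier tensor_op_carrier] ptrans_tensor_op[OF assms])
  then have "ptrans (d1*d2) (d1*d2) (Zop d1 d2 X Y) $$ (r,c) = x * (e - f / of_nat d2) + y * (f / of_nat d2)"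
    using rc idx unfolding x_def y_def e_def f_def by (simp add: tensor_op_def ptrans_omega_entry)
  also have "\<dots> = (1 / of_nat d2) * (((of_nat d2 - 1) * x + y) * ((e + f) / 2)
                                   + ((of_nat d2 + 1) * x - y) * ((e - f) / 2))"
    using assms by (simp add: field_simps)
  also have "\<dots> = ?R $$ (r,c)"
    using rc idx unfolding x_def y_def e_def f_def
    by (simp add: tensor_op_def swap_proj_def ptrans_def)
  finally show "ptrans (d1*d2) (d1*d2) (Zop d1 d2 X Y) $$ (r,c) = ?R $$ (r,c)" .
qed (auto simp: tensor_op_def ptrans_def)

lemma ppt_Zop:
  assumes "d1 \<ge> 1" "d2 \<ge> 1" "psd (d1*d1) X" "psd (d1*d1) Y"
    and "op_ge (d1*d1) ((of_nat d2 - 1) \<cdot>\<^sub>m ptrans d1 d1 X) (- ptrans d1 d1 Y)"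
    and "op_ge (d1*d1) ((of_nat d2 + 1) \<cdot>\<^sub>m ptrans d1 d1 X) (ptrans d1 d1 Y)"
  shows "ppt (d1*d2) (d1*d2) (Zop d1 d2 X Y)"
  using assms unfolding ppt_def op_ge_def ptrans_Zop[OF assms(1,2)]
  by (intro conjI psd_Zop psd_smult psd_add psd_tensor_op psd_swap_proj) auto

section \<open>Rank bounds\<close>

lemma (in vec_space) rank_basis_of_cols:
  assumes "A \<in> carrier_mat n nc"
  obtains U where "finite U" "U \<subseteq> carrier_vec n" "card U = rank A" "set (cols A) \<subseteq> span U"
proof -
  define C where "C = set (cols A)"
  have C: "C \<subseteq> carrier_vec n" "finite C" unfolding C_def using assms cols_dim by blast+
  have "lin_indpt {}" by (simp add: lin_dep_def)
  then obtain U where U: "finite U" "maximal U (\<lambda>T. T \<subseteq> C \<and> lin_indpt T)"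
    using maximal_exists_superset[of C "\<lambda>T. T \<subseteq> C \<and> lin_indpt T" "{}"] C by blast
  have UC: "U \<subseteq> C" and Uli: "lin_indpt U" using U(2) unfolding maximal_def by auto
  have Uc: "U \<subseteq> carrier_vec n" using UC C by auto
  have "C \<subseteq> span U"
  proof
    fix c assume c: "c \<in> C"
    show "c \<in> span U"
    proof (cases "c \<in> U")
      case True then show ?thesis using in_own_span[OF Uc] by auto
    next
      case False
      have "\<not> (U \<union> {c} \<subseteq> C \<and> lin_indpt (U \<union> {c}))"
        using U(2) False unfolding maximal_def by blast
      then have "lin_dep (U \<union> {c})" using UC c by auto
      then show ?thesis using lin_dep_iff_in_span[OF Uc Uli _ False] c C by auto
    qed
  qed
  moreover have "card U = rank A"
    using rank_card_indpt[OF assms, of U] U(2) unfolding C_def by simp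
  ultimately show ?thesis using that U(1) Uc unfolding C_def by blast
qed

lemma (in vec_space) span_annihilated:
  assumes "U \<subseteq> carrier_vec n" "\<And>u. u \<in> U \<Longrightarrow> (\<Sum>j<n. u $ j * w j) = 0" "v \<in> span U"
  shows "(\<Sum>j<n. v $ j * w j) = 0"
proof -
  define Ann where "Ann = {v \<in> carrier_vec n. (\<Sum>j<n. v $ j * w j) = 0}"
  have "submodule class_ring Ann V"
    unfolding submodule_def
  proof (intro conjI allI impI ballI)
    show "module class_ring V" by (rule vec_module)
    show "Ann \<subseteq> carrier V" unfolding Ann_def by auto
  next
    fix v v' assume "v \<in> Ann" "v' \<in> Ann"
    then show "v \<oplus>\<^bsub>V\<^esub> v' \<in> Ann" unfolding Ann_def by (auto simp: ring_distribs sum.distrib)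
  next
    show "\<zero>\<^bsub>V\<^esub> \<in> Ann" unfolding Ann_def by simp
  next
    fix a :: 'a and v assume "a \<in> carrier class_ring" "v \<in> Ann"
    then show "a \<odot>\<^bsub>V\<^esub> v \<in> Ann" unfolding Ann_def
      by (auto simp: sum_distrib_left[symmetric] mult.assoc)
  qed
  moreover have "U \<subseteq> Ann" using assms(1,2) unfolding Ann_def by auto
  ultimately have "span U \<subseteq> Ann" by (rule span_is_subset[rotated])
  then show ?thesis using assms(3) unfolding Ann_def by auto
qed

lemma hermitian_kernel_orthogonal_rank_vectors:
  fixes M :: "complex mat"
  assumes M: "M \<in> carrier_mat n n"
    and herm: "\<And>i j. i < n \<Longrightarrow> j < n \<Longrightarrow> M $$ (i,j) = cnj (M $$ (j,i))"
  obtains s where "\<And>t. t < vec_space.rank n M \<Longrightarrow> s t \<in> carrier_vec n"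
    and "\<And>y l. y \<in> carrier_vec n \<Longrightarrow> (\<forall>t < vec_space.rank n M. (\<Sum>j<n. cnj (s t $ j) * y $ j) = 0) \<Longrightarrow>
           l < n \<Longrightarrow> (\<Sum>j<n. M $$ (l,j) * y $ j) = 0"
proof -
  interpret vs: vec_space "TYPE(complex)" n .
  obtain U where U: "finite U" "U \<subseteq> carrier_vec n" "card U = vs.rank M" "set (cols M) \<subseteq> vs.span U"
    using vs.rank_basis_of_cols[OF M] by blast
  obtain xs where xs: "set xs = U" "length xs = vs.rank M"
    using U(1,3) by (metis distinct_card finite_distinct_list)
  show ?thesis
  proof (rule that[of "(!) xs"])
    fix t assume "t < vs.rank M"
    then show "xs ! t \<in> carrier_vec n" using xs U(2) by auto
  next
    fix y l assume y: "y \<in> carrier_vec n" and l: "l < n"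
      and orth: "\<forall>t < vs.rank M. (\<Sum>j<n. cnj (xs ! t $ j) * y $ j) = 0"
    have "(\<Sum>j<n. u $ j * cnj (y $ j)) = 0" if "u \<in> U" for u
    proof -
      obtain t where "t < vs.rank M" "u = xs ! t" using \<open>u \<in> U\<close> xs by (metis in_set_conv_nth)
      then have "cnj (\<Sum>j<n. cnj (u $ j) * y $ j) = 0" using orth by simp
      then show ?thesis by (simp add: mult.commute)
    qed
    moreover have "col M l \<in> set (cols M)" using M l by (simp add: cols_def)
    then have "col M l \<in> vs.span U" using U(4) by blast
    ultimately have "(\<Sum>j<n. col M l $ j * cnj (y $ j)) = 0"
      by (rule vs.span_annihilated[OF U(2)])
    moreover have "cnj (\<Sum>j<n. col M l $ j * cnj (y $ j)) = (\<Sum>j<n. M $$ (l,j) * y $ j)"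
      unfolding cnj_sum using M l herm[OF l] by (intro sum.cong refl) simp
    ultimately show "(\<Sum>j<n. M $$ (l,j) * y $ j) = 0" by (metis complex_cnj_zero)
  qed
qed

lemma homogeneous_system_nontrivial_solution:
  fixes f :: "nat \<Rightarrow> nat \<Rightarrow> complex"
  assumes "m < n"
  obtains x where "\<exists>i<n. x i \<noteq> 0" "\<And>r. r < m \<Longrightarrow> (\<Sum>c<n. f r c * x c) = 0"
proof -
  define A where "A = mat\<^sub>r n n (\<lambda>i. if i = n - 1 then 0\<^sub>v n else vec n (f i))"
  have A: "A \<in> carrier_mat n n" unfolding A_def by simp
  have "det A = 0" unfolding A_def using assms by (intro det_row_0) auto
  then obtain v where v: "v \<in> carrier_vec n" "v \<noteq> 0\<^sub>v n" "A *\<^sub>v v = 0\<^sub>v n"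
    using det_0_iff_vec_prod_zero_field[OF A] by blast
  show ?thesis
  proof (rule that[of "(\<lambda>i. v $ i)"])
    show "\<exists>i<n. v $ i \<noteq> 0" using v(1,2) by (metis eq_vecI index_zero_vec carrier_vecD)
    fix r assume r: "r < m"
    then have "(A *\<^sub>v v) $ r = (\<Sum>j<n. f r j * v $ j)"
      using assms v(1) unfolding A_def by (simp add: scalar_prod_def mat_of_rows_def lessThan_atLeast0)
    then show "(\<Sum>c<n. f r c * v $ c) = 0" using v(3) r assms by simp
  qed
qed

lemma weighted_sum_cnj_mult_eq_0D:
  fixes p :: "'k \<Rightarrow> real" and z :: "'k \<Rightarrow> complex"
  assumes "(\<Sum>k\<in>K. of_real (p k) * (z k * cnj (z k))) = 0" "finite K" "\<And>k. k \<in> K \<Longrightarrow> p k > 0" "k \<in> K"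
  shows "z k = 0"
proof -
  have "of_real (\<Sum>k\<in>K. p k * (cmod (z k))\<^sup>2) = (0::complex)"
    using assms(1) by (simp add: mult.commute[of "z _"] cnj_mult_self_eq_norm_square)
  then have "(\<Sum>k\<in>K. p k * (cmod (z k))\<^sup>2) = 0" by (simp only: of_real_eq_0_iff)
  moreover have "0 \<le> p k * (cmod (z k))\<^sup>2" if "k \<in> K" for k
    using assms(3)[OF that] by simp
  ultimately have "\<forall>k\<in>K. p k * (cmod (z k))\<^sup>2 = 0"
    using sum_nonneg_eq_0_iff[OF assms(2), of "\<lambda>k. p k * (cmod (z k))\<^sup>2"] by simp
  then show ?thesis using assms(3,4) by fastforce
qed

lemma gram_kernel:
  fixes u :: "nat \<Rightarrow> nat \<Rightarrow> complex"
  assumes ker: "\<And>l. l < n \<Longrightarrow> (\<Sum>j<n. (\<Sum>i<N. cnj (u i l) * u i j) * y j) = 0" and "i < N"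
  shows "(\<Sum>j<n. u i j * y j) = 0"
proof -
  define h where "h i = (\<Sum>j<n. u i j * y j)" for i
  have "0 = (\<Sum>l<n. cnj (y l) * (\<Sum>j<n. (\<Sum>i<N. cnj (u i l) * u i j) * y j))"
    using ker by simp
  also have "\<dots> = (\<Sum>l<n. \<Sum>j<n. \<Sum>i<N. (cnj (y l) * cnj (u i l)) * (u i j * y j))"
    by (intro sum.cong refl) (simp add: sum_distrib_left sum_distrib_right mult_ac)
  also have "\<dots> = (\<Sum>l<n. \<Sum>i<N. \<Sum>j<n. (cnj (y l) * cnj (u i l)) * (u i j * y j))"
    by (intro sum.cong refl sum.swap)
  also have "\<dots> = (\<Sum>i<N. \<Sum>l<n. \<Sum>j<n. (cnj (y l) * cnj (u i l)) * (u i j * y j))"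
    by (rule sum.swap)
  also have "\<dots> = (\<Sum>i<N. of_real 1 * (cnj (h i) * h i))"
  proof (intro sum.cong refl)
    fix i
    have "cnj (h i) = (\<Sum>l<n. cnj (y l) * cnj (u i l))"
      unfolding h_def cnj_sum by (simp add: mult.commute)
    then show "(\<Sum>l<n. \<Sum>j<n. (cnj (y l) * cnj (u i l)) * (u i j * y j)) = of_real 1 * (cnj (h i) * h i)"
      unfolding h_def by (simp only: sum_product mult_1 of_real_1)
  qed
  finally have "cnj (h i) = 0"
    using weighted_sum_cnj_mult_eq_0D[of "\<lambda>_. 1" "\<lambda>i. cnj (h i)" "{..<N}" i] assms(2) by simp
  then have "h i = 0" by simp
  then show ?thesis unfolding h_def .
qed

lemma ptraceA_outer:
  assumes "dim_vec v = dA * dB"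
  shows "ptraceA dA dB (outer v) = mat dB dB (\<lambda>(j,l). \<Sum>i<dA. v $ (i*dB + j) * cnj (v $ (i*dB + l)))"
proof (rule eq_matI)
  fix j l assume "j < dim_row (mat dB dB (\<lambda>(j,l). \<Sum>i<dA. v $ (i*dB + j) * cnj (v $ (i*dB + l))))"
    "l < dim_col (mat dB dB (\<lambda>(j,l). \<Sum>i<dA. v $ (i*dB + j) * cnj (v $ (i*dB + l))))"
  then have jl: "j < dB" "l < dB" by auto
  then have "i*dB + j < dA*dB" "i*dB + l < dA*dB" if "i < dA" for i
    using that by (auto intro: mult_add_less)
  then show "ptraceA dA dB (outer v) $$ (j,l) = mat dB dB (\<lambda>(j,l). \<Sum>i<dA. v $ (i*dB + j) * cnj (v $ (i*dB + l))) $$ (j,l)"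
    using jl assms by (auto simp: ptraceA_def outer_def intro!: sum.cong)
qed (auto simp: ptraceA_def outer_def)

text \<open>The hypothesis says that contracting \<open>\<psi> \<in> \<complex>\<^sup>D \<otimes> \<complex>\<^sup>D\<close> on its second factor against
  the vectors \<open>g\<^sub>a\<^sub>1 \<otimes> x\<close> (\<open>a\<^sub>1 < d\<^sub>1\<close>) determines \<open>x \<in> \<complex>\<^sup>d\<^sup>2\<close>. If \<open>d\<^sub>1 \<cdot> rank < d\<^sub>2\<close>, some
  nonzero \<open>x\<close> satisfies the \<open>d\<^sub>1 \<cdot> rank\<close> linear conditions making every \<open>g\<^sub>a\<^sub>1 \<otimes> x\<close> orthogonal
  to the range of the reduced matrix of \<open>\<psi>\<close>, hence annihilated by \<open>\<psi>\<close>.\<close>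

lemma rank_reduced_matrix_ge:
  fixes d1 d2 :: nat and \<psi> :: "nat \<Rightarrow> complex" and g :: "nat \<Rightarrow> nat \<Rightarrow> complex"
  defines "D \<equiv> d1 * d2"
  assumes determines: "\<And>x i. (\<forall>a1<d1. \<forall>a<D. (\<Sum>b<D. \<psi> (a*D + b) * g a1 (b div d2) * x (b mod d2)) = 0)
      \<Longrightarrow> i < d2 \<Longrightarrow> x i = 0"
  shows "d2 \<le> d1 * vec_space.rank D (mat D D (\<lambda>(j,l). \<Sum>i<D. \<psi> (i*D + j) * cnj (\<psi> (i*D + l))))"
    (is "_ \<le> d1 * vec_space.rank D ?R")
proof (rule ccontr)
  define k where "k = vec_space.rank D ?R"
  assume "\<not> d2 \<le> d1 * vec_space.rank D ?R"
  then have lt: "d1 * k < d2" unfolding k_def by simp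
  have "?R \<in> carrier_mat D D" by simp
  moreover have "?R $$ (i,j) = cnj (?R $$ (j,i))" if "i < D" "j < D" for i j
    using that by (simp add: cnj_sum mult.commute)
  ultimately obtain s where s: "\<And>y l. y \<in> carrier_vec D \<Longrightarrow> (\<forall>t<k. (\<Sum>j<D. cnj (s t $ j) * y $ j) = 0) \<Longrightarrow>
      l < D \<Longrightarrow> (\<Sum>j<D. ?R $$ (l,j) * y $ j) = 0"
    unfolding k_def by (rule hermitian_kernel_orthogonal_rank_vectors) blast+
  \<comment> \<open>equation \<open>r = a\<^sub>1 k + t\<close> says \<open>g\<^sub>a\<^sub>1 \<otimes> x\<close> is orthogonal to \<open>s\<^sub>t\<close> (up to conjugation)\<close>
  define f where "f r b2 = (\<Sum>j<D. if j mod d2 = b2 then s (r mod k) $ j * g (r div k) (j div d2) else 0)"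
    for r b2
  obtain x where x: "\<exists>i<d2. x i \<noteq> 0" "\<And>r. r < d1*k \<Longrightarrow> (\<Sum>c<d2. f r c * x c) = 0"
    using homogeneous_system_nontrivial_solution[OF lt] by blast
  then have "d2 > 0" by auto
  have "(\<Sum>b<D. \<psi> (a*D + b) * g a1 (b div d2) * x (b mod d2)) = 0" if a1: "a1 < d1" and a: "a < D" for a1 a
  proof -
    define y where "y j = g a1 (j div d2) * x (j mod d2)" for j
    have "(\<Sum>j<D. cnj (s t $ j) * cnj (y j)) = 0" if t: "t < k" for t
    proof -
      have r: "a1 * k + t < d1 * k" "(a1 * k + t) div k = a1" "(a1 * k + t) mod k = t"
        using a1 t by (auto intro: mult_add_less)
      have "(\<Sum>c<d2. f (a1 * k + t) c * x c)
          = (\<Sum>c<d2. \<Sum>j<D. if j mod d2 = c then s t $ j * g a1 (j div d2) * x c else 0)"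
        unfolding f_def r(2,3) by (simp add: sum_distrib_right if_distrib[of "\<lambda>u. u * _"] cong: if_cong)
      also have "\<dots> = (\<Sum>j<D. \<Sum>c<d2. if j mod d2 = c then s t $ j * g a1 (j div d2) * x c else 0)"
        by (rule sum.swap)
      also have "\<dots> = (\<Sum>j<D. s t $ j * y j)"
        using \<open>d2 > 0\<close> by (intro sum.cong refl) (simp add: y_def mult.assoc)
      finally have "(\<Sum>j<D. s t $ j * y j) = 0" using x(2)[OF r(1)] by simp
      then have "cnj (\<Sum>j<D. s t $ j * y j) = 0" by simp
      then show ?thesis by (simp add: cnj_sum)
    qed
    then have "(\<Sum>j<D. ?R $$ (l,j) * vec D (\<lambda>j. cnj (y j)) $ j) = 0" if "l < D" for l
      using s[of "vec D (\<lambda>j. cnj (y j))" l] that by simp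
    then have "(\<Sum>j<D. (\<Sum>i<D. cnj (cnj (\<psi> (i*D + l))) * cnj (\<psi> (i*D + j))) * cnj (y j)) = 0"
      if "l < D" for l
      using that by (simp add: mult.commute)
    then have "(\<Sum>j<D. cnj (\<psi> (a*D + j)) * cnj (y j)) = 0"
      by (rule gram_kernel[where u = "\<lambda>i j. cnj (\<psi> (i*D + j))", OF _ a])
    moreover have "cnj (\<Sum>j<D. \<psi> (a*D + j) * y j) = (\<Sum>j<D. cnj (\<psi> (a*D + j)) * cnj (y j))"
      by (simp add: cnj_sum)
    ultimately have "(\<Sum>j<D. \<psi> (a*D + j) * y j) = 0" by (metis complex_cnj_zero_iff)
    then show ?thesis by (simp add: y_def mult.assoc)
  qed
  then have "x i = 0" if "i < d2" for i
    using determines[of x i] that by blast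
  then show False using x(1) by blast
qed

section \<open>The Schmidt number of \<open>Z\<close>\<close>

text \<open>\<open>contract d1 d2 \<alpha> \<psi>\<close> is the partial inner product \<open>(\<langle>\<alpha>| \<otimes> 1) |\<psi>\<rangle>\<close> of \<open>\<alpha>\<close> on \<open>A\<^sub>1B\<^sub>1\<close>
  with \<open>\<psi>\<close> on \<open>A\<^sub>1A\<^sub>2B\<^sub>1B\<^sub>2\<close>, a vector on \<open>A\<^sub>2B\<^sub>2\<close>.\<close>

definition contract :: "nat \<Rightarrow> nat \<Rightarrow> complex vec \<Rightarrow> complex vec \<Rightarrow> nat \<Rightarrow> complex" where
  "contract d1 d2 \<alpha> \<psi> i2 = (\<Sum>i1<d1*d1. cnj (\<alpha> $ i1) * \<psi> $ tensor_idx d1 d2 i1 i2)"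

lemma contract_decomposition:
  assumes \<alpha>: "\<alpha> \<in> carrier_vec (d1*d1)" "qform X \<alpha> = 0"
    and dec: "is_decomp (d1*d2) (d1*d2) (Zop d1 d2 X Y) p \<psi> m"
    and ij2: "i2 < d2*d2" "j2 < d2*d2"
  shows "(\<Sum>k<m. of_real (p k) * (contract d1 d2 \<alpha> (\<psi> k) i2 * cnj (contract d1 d2 \<alpha> (\<psi> k) j2)))
       = qform Y \<alpha> * omega d2 $$ (i2,j2)"
proof -
  define Z where "Z = Zop d1 d2 X Y"
  define J where "J = tensor_idx d1 d2"
  define a where "a i = \<alpha> $ i" for i
  define \<phi> where "\<phi> k = contract d1 d2 \<alpha> (\<psi> k)" for k
  define W where "W = (\<Sum>i1<d1*d1. \<Sum>j1<d1*d1. cnj (a i1) * Z $$ (J i1 i2, J j1 j2) * a j1)"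
  have J: "J i1 i2 < (d1*d2)*(d1*d2)" "J j1 j2 < (d1*d2)*(d1*d2)"
      "idx1 d1 d2 (J i1 i2) = i1" "idx2 d1 d2 (J i1 i2) = i2"
      "idx1 d1 d2 (J j1 j2) = j1" "idx2 d1 d2 (J j1 j2) = j2"
    if "i1 < d1*d1" "j1 < d1*d1" for i1 j1
    using tensor_idx[OF that(1) ij2(1)] tensor_idx[OF that(2) ij2(2)] unfolding J_def by auto
  \<comment> \<open>\<open>W\<close> is the \<open>(i\<^sub>2, j\<^sub>2)\<close> entry of \<open>\<langle>\<alpha>|Z|\<alpha>\<rangle>\<close>; compute it from the definition of \<open>Z\<close>
      and from the decomposition\<close>
  have "W = (\<Sum>i1<d1*d1. \<Sum>j1<d1*d1. cnj (a i1) * X $$ (i1,j1) * a j1 * (1\<^sub>m (d2*d2) - omega d2) $$ (i2,j2)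
                                    + cnj (a i1) * Y $$ (i1,j1) * a j1 * omega d2 $$ (i2,j2))"
    unfolding W_def Z_def Zop_eq_tensor_op
  proof (intro sum.cong refl)
    fix i1 j1 assume "i1 \<in> {..<d1*d1}" "j1 \<in> {..<d1*d1}"
    then show "cnj (a i1) * (tensor_op d1 d2 X (1\<^sub>m (d2*d2) - omega d2) + tensor_op d1 d2 Y (omega d2)) $$ (J i1 i2, J j1 j2) * a j1
        = cnj (a i1) * X $$ (i1,j1) * a j1 * (1\<^sub>m (d2*d2) - omega d2) $$ (i2,j2)
          + cnj (a i1) * Y $$ (i1,j1) * a j1 * omega d2 $$ (i2,j2)"
      using J[of i1 j1] by (simp add: tensor_op_def algebra_simps)
  qed
  also have "\<dots> = (\<Sum>i1<d1*d1. \<Sum>j1<d1*d1. cnj (a i1) * X $$ (i1,j1) * a j1) * (1\<^sub>m (d2*d2) - omega d2) $$ (i2,j2)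
                 + (\<Sum>i1<d1*d1. \<Sum>j1<d1*d1. cnj (a i1) * Y $$ (i1,j1) * a j1) * omega d2 $$ (i2,j2)"
    by (simp add: sum.distrib sum_distrib_right)
  also have "\<dots> = qform Y \<alpha> * omega d2 $$ (i2,j2)"
    using \<alpha> unfolding qform_def a_def by simp
  finally have W_Z: "W = qform Y \<alpha> * omega d2 $$ (i2,j2)" .
  have "W = (\<Sum>i1<d1*d1. \<Sum>j1<d1*d1. \<Sum>k<m.
              of_real (p k) * ((cnj (a i1) * \<psi> k $ J i1 i2) * (a j1 * cnj (\<psi> k $ J j1 j2))))"
    unfolding W_def
  proof (intro sum.cong refl)
    fix i1 j1 assume "i1 \<in> {..<d1*d1}" "j1 \<in> {..<d1*d1}"
    then have ij1: "i1 < d1*d1" "j1 < d1*d1" by auto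
    have "Z $$ (J i1 i2, J j1 j2) = (\<Sum>k<m. of_real (p k) * outer (\<psi> k) $$ (J i1 i2, J j1 j2))"
      using dec J[OF ij1] unfolding is_decomp_def Z_def by blast
    also have "\<dots> = (\<Sum>k<m. of_real (p k) * (\<psi> k $ J i1 i2 * cnj (\<psi> k $ J j1 j2)))"
      using dec J[OF ij1] unfolding is_decomp_def by (intro sum.cong refl) (auto simp: outer_def)
    finally have "Z $$ (J i1 i2, J j1 j2) = (\<Sum>k<m. of_real (p k) * (\<psi> k $ J i1 i2 * cnj (\<psi> k $ J j1 j2)))" .
    then show "cnj (a i1) * Z $$ (J i1 i2, J j1 j2) * a j1 = (\<Sum>k<m.
        of_real (p k) * ((cnj (a i1) * \<psi> k $ J i1 i2) * (a j1 * cnj (\<psi> k $ J j1 j2))))"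
      by (simp add: sum_distrib_left sum_distrib_right mult_ac)
  qed
  also have "\<dots> = (\<Sum>k<m. \<Sum>i1<d1*d1. \<Sum>j1<d1*d1.
              of_real (p k) * ((cnj (a i1) * \<psi> k $ J i1 i2) * (a j1 * cnj (\<psi> k $ J j1 j2))))"
    by (subst sum.swap) (intro sum.cong refl sum.swap)
  also have "\<dots> = (\<Sum>k<m. of_real (p k) * (\<phi> k i2 * cnj (\<phi> k j2)))"
  proof (intro sum.cong refl)
    fix k
    have cnj_\<phi>: "cnj (\<phi> k j2) = (\<Sum>j1<d1*d1. a j1 * cnj (\<psi> k $ J j1 j2))"
      unfolding \<phi>_def contract_def a_def J_def cnj_sum by simp
    show "(\<Sum>i1<d1*d1. \<Sum>j1<d1*d1. of_real (p k) * ((cnj (a i1) * \<psi> k $ J i1 i2) * (a j1 * cnj (\<psi> k $ J j1 j2))))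
        = of_real (p k) * (\<phi> k i2 * cnj (\<phi> k j2))"
      unfolding cnj_\<phi> unfolding \<phi>_def contract_def a_def J_def sum_product
      by (simp only: sum_distrib_left)
  qed
  finally show ?thesis using W_Z unfolding \<phi>_def by simp
qed

text \<open>Every vector of a decomposition of \<open>c \<omega>\<close> lies in the range of \<open>\<omega>\<close>: its off-diagonal
  coordinates vanish because \<open>\<omega>\<close> has zero diagonal there, and its coordinates at \<open>|aa\<rangle>\<close> and
  \<open>|00\<rangle>\<close> agree because \<open>\<omega>\<close> annihilates \<open>|aa\<rangle> - |00\<rangle>\<close>.\<close>

lemma decomposition_of_omega_multiple:
  fixes p :: "nat \<Rightarrow> real" and \<phi> :: "nat \<Rightarrow> nat \<Rightarrow> complex"
  assumes "d \<ge> 1" "c \<noteq> 0" and p: "\<And>k. k < m \<Longrightarrow> p k > 0"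
    and dec: "\<And>i j. i < d*d \<Longrightarrow> j < d*d \<Longrightarrow> (\<Sum>k<m. of_real (p k) * (\<phi> k i * cnj (\<phi> k j))) = c * omega d $$ (i,j)"
  obtains k where "k < m" "\<phi> k 0 \<noteq> 0" "\<And>a b. a < d \<Longrightarrow> b < d \<Longrightarrow> \<phi> k (a*d + b) = of_bool (a = b) * \<phi> k 0"
proof -
  have zero: "\<phi> k i = 0" if "(\<Sum>k<m. of_real (p k) * (\<phi> k i * cnj (\<phi> k i))) = 0" "k < m" for k i
    using weighted_sum_cnj_mult_eq_0D[of p "\<lambda>k. \<phi> k i" "{..<m}" k] that p by auto
  have omega: "omega d $$ (a*d + b, a'*d + b') = of_bool (a = b \<and> a' = b') / of_nat d"
    if "a < d" "b < d" "a' < d" "b' < d" for a b a' b'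
    using that by (simp add: omega_entry mult_add_less mult_add_div_eq mult_add_mod_eq)
  have idx: "a*d + b < d*d" if "a < d" "b < d" for a b
    using that by (rule mult_add_less)
  have zero_idx: "0 < d" "(0::nat) = 0*d + 0" using assms(1) by auto
  have off_diagonal: "\<phi> k (a*d + b) = 0" if "a < d" "b < d" "a \<noteq> b" "k < m" for a b k
    using that dec[OF idx[OF that(1,2)] idx[OF that(1,2)]] omega[OF that(1,2) that(1,2)]
    by (intro zero) auto
  have diagonal: "\<phi> k (a*d + a) = \<phi> k 0" if "a < d" "k < m" for a k
  proof -
    define u where "u = a*d + a"
    have "(\<Sum>k<m. of_real (p k) * ((\<phi> k u - \<phi> k 0) * cnj (\<phi> k u - \<phi> k 0)))
       = (\<Sum>k<m. of_real (p k) * (\<phi> k u * cnj (\<phi> k u))) - (\<Sum>k<m. of_real (p k) * (\<phi> k u * cnj (\<phi> k 0)))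
         - (\<Sum>k<m. of_real (p k) * (\<phi> k 0 * cnj (\<phi> k u))) + (\<Sum>k<m. of_real (p k) * (\<phi> k 0 * cnj (\<phi> k 0)))"
      by (simp add: algebra_simps sum.distrib sum_subtractf)
    also have "\<dots> = 0"
      using dec[of u u] dec[of u 0] dec[of 0 u] dec[of 0 0] idx[OF that(1,1)] zero_idx
        omega[OF that(1,1) that(1,1)] omega[OF that(1,1) zero_idx(1) zero_idx(1)] omega[OF zero_idx(1) zero_idx(1) that(1,1)]
        omega[OF zero_idx(1) zero_idx(1) zero_idx(1) zero_idx(1)]
      unfolding u_def by (simp del: mult_0_right add_0)
    finally show ?thesis
      using weighted_sum_cnj_mult_eq_0D[of p "\<lambda>k. \<phi> k u - \<phi> k 0" "{..<m}" k] that p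
      unfolding u_def by auto
  qed
  have "\<exists>k<m. \<phi> k 0 \<noteq> 0"
  proof (rule ccontr)
    assume "\<not> (\<exists>k<m. \<phi> k 0 \<noteq> 0)"
    then have "c * omega d $$ (0,0) = 0" using dec[of 0 0] zero_idx by simp
    then show False using assms(1,2) zero_idx by (simp add: omega_entry)
  qed
  then obtain k where "k < m" "\<phi> k 0 \<noteq> 0" by blast
  then show ?thesis
    using that[of k] off_diagonal diagonal by fastforce
qed

lemma contract_mult_sum:
  assumes "a2 < d2"
  shows "(\<Sum>b2<d2. contract d1 d2 \<alpha> \<psi> (a2*d2 + b2) * x b2)
       = (\<Sum>a1<d1. \<Sum>b<d1*d2. \<psi> $ ((a1*d2 + a2)*(d1*d2) + b) * cnj (\<alpha> $ (a1*d1 + b div d2)) * x (b mod d2))"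
proof -
  have "(\<Sum>b2<d2. contract d1 d2 \<alpha> \<psi> (a2*d2 + b2) * x b2)
      = (\<Sum>b2<d2. \<Sum>a1<d1. \<Sum>b1<d1.
           cnj (\<alpha> $ (a1*d1 + b1)) * \<psi> $ ((a1*d2 + a2)*(d1*d2) + (b1*d2 + b2)) * x b2)"
    unfolding contract_def sum_lessThan_mult[where n = d1 and m = d1] sum_distrib_right
    using assms by (intro sum.cong refl) (simp add: tensor_idx_split)
  also have "\<dots> = (\<Sum>a1<d1. \<Sum>b1<d1. \<Sum>b2<d2.
           cnj (\<alpha> $ (a1*d1 + b1)) * \<psi> $ ((a1*d2 + a2)*(d1*d2) + (b1*d2 + b2)) * x b2)"
    by (subst sum.swap) (intro sum.cong refl sum.swap)
  also have "\<dots> = (\<Sum>a1<d1. \<Sum>b<d1*d2. \<psi> $ ((a1*d2 + a2)*(d1*d2) + b) * cnj (\<alpha> $ (a1*d1 + b div d2)) * x (b mod d2))"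
    unfolding sum_lessThan_mult[where n = d1 and m = d2]
    by (intro sum.cong refl) (simp add: mult_add_div_eq mult_add_mod_eq mult_ac)
  finally show ?thesis .
qed

lemma schmidt_rank_ge_if_contract_maximally_entangled:
  assumes "\<psi> \<in> carrier_vec ((d1*d2)*(d1*d2))" "c \<noteq> 0"
    and contract: "\<And>a b. a < d2 \<Longrightarrow> b < d2 \<Longrightarrow> contract d1 d2 \<alpha> \<psi> (a*d2 + b) = of_bool (a = b) * c"
  shows "d2 \<le> d1 * schmidt_rank (d1*d2) (d1*d2) \<psi>"
  unfolding schmidt_rank_def ptraceA_outer[OF carrier_vecD[OF assms(1)]]
proof (rule rank_reduced_matrix_ge[where g = "\<lambda>a1 b1. cnj (\<alpha> $ (a1*d1 + b1))"])
  fix x :: "nat \<Rightarrow> complex" and a2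
  assume H: "\<forall>a1<d1. \<forall>a<d1*d2.
    (\<Sum>b<d1*d2. \<psi> $ (a*(d1*d2) + b) * cnj (\<alpha> $ (a1*d1 + b div d2)) * x (b mod d2)) = 0"
    and a2: "a2 < d2"
  have "c * x a2 = (\<Sum>b2<d2. if a2 = b2 then c * x b2 else 0)"
    using a2 by simp
  also have "\<dots> = (\<Sum>b2<d2. contract d1 d2 \<alpha> \<psi> (a2*d2 + b2) * x b2)"
    using a2 contract by (intro sum.cong refl) simp
  also have "\<dots> = 0"
    unfolding contract_mult_sum[OF a2] using H a2 by (intro sum.neutral) (auto intro: mult_add_less)
  finally show "x a2 = 0" using assms(2) by simp
qed

lemma schmidt_rank_bound_in_decomposition:
  assumes "d1 \<ge> 1" "d2 \<ge> 1"
    and \<alpha>: "\<alpha> \<in> carrier_vec (d1*d1)" "qform X \<alpha> = 0" "qform Y \<alpha> \<noteq> 0"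
    and dec: "is_decomp (d1*d2) (d1*d2) (Zop d1 d2 X Y) p \<psi> m"
  shows "\<exists>k<m. d2 \<le> d1 * schmidt_rank (d1*d2) (d1*d2) (\<psi> k)"
proof -
  have p: "\<And>k. k < m \<Longrightarrow> p k > 0" and \<psi>: "\<And>k. k < m \<Longrightarrow> \<psi> k \<in> carrier_vec ((d1*d2)*(d1*d2))"
    using dec unfolding is_decomp_def by auto
  obtain k where k: "k < m" "contract d1 d2 \<alpha> (\<psi> k) 0 \<noteq> 0"
    "\<And>a b. a < d2 \<Longrightarrow> b < d2 \<Longrightarrow>
       contract d1 d2 \<alpha> (\<psi> k) (a*d2 + b) = of_bool (a = b) * contract d1 d2 \<alpha> (\<psi> k) 0"
    using decomposition_of_omega_multiple[OF assms(2) \<alpha>(3) p contract_decomposition[OF \<alpha>(1,2) dec]]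
    by blast
  then show ?thesis
    using schmidt_rank_ge_if_contract_maximally_entangled[OF \<psi>[OF k(1)] k(2)] by blast
qed

lemma is_decomp_if_psd:
  assumes "psd (dA*dB) \<rho>"
  shows "\<exists>p \<psi> m. is_decomp dA dB \<rho> p \<psi> m"
proof -
  obtain m :: nat and z where z: "\<forall>i<dA*dB. \<forall>j<dA*dB. \<rho> $$ (i,j) = (\<Sum>k<m. z k i * cnj (z k j))"
    using psd_gram_decomposition[OF assms] by blast
  have "is_decomp dA dB \<rho> (\<lambda>_. 1) (\<lambda>k. vec (dA*dB) (z k)) m"
    using assms z unfolding is_decomp_def psd_def by (simp add: outer_def)
  then show ?thesis by blast
qed

lemma schmidt_number_ge:
  assumes "psd (dA*dB) \<rho>"
    and "\<And>p \<psi> m. is_decomp dA dB \<rho> p \<psi> m \<Longrightarrow> \<exists>k<m. r \<le> schmidt_rank dA dB (\<psi> k)"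
  shows "r \<le> schmidt_number dA dB \<rho>"
  unfolding schmidt_number_def
proof (rule cInf_greatest)
  show "{Max ((\<lambda>k. schmidt_rank dA dB (\<psi> k)) ` {..<m}) |p \<psi> m. is_decomp dA dB \<rho> p \<psi> m} \<noteq> {}"
    using is_decomp_if_psd[OF assms(1)] by blast
next
  fix s assume "s \<in> {Max ((\<lambda>k. schmidt_rank dA dB (\<psi> k)) ` {..<m}) |p \<psi> m. is_decomp dA dB \<rho> p \<psi> m}"
  then obtain p \<psi> m where "s = Max ((\<lambda>k. schmidt_rank dA dB (\<psi> k)) ` {..<m})" "is_decomp dA dB \<rho> p \<psi> m"
    by blast
  moreover obtain k where "k < m" "r \<le> schmidt_rank dA dB (\<psi> k)"
    using assms(2) \<open>is_decomp dA dB \<rho> p \<psi> m\<close> by blast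
  ultimately show "r \<le> s" by (meson Max_ge finite_imageI finite_lessThan image_eqI le_trans lessThan_iff)
qed

lemma nat_ceiling_divide_le:
  assumes "d1 \<ge> 1" "d2 \<le> d1 * r"
  shows "nat \<lceil>real d2 / real d1\<rceil> \<le> r"
proof -
  have "real d2 / real d1 \<le> real r"
    using assms by (simp add: divide_le_eq mult.commute flip: of_nat_mult)
  then show ?thesis by (simp add: ceiling_le_iff nat_le_iff)
qed

theorem theorem3:
  fixes d1 d2 :: nat and X Y :: "complex mat"
  assumes "d1 \<ge> 1" and "d2 \<ge> 1"
    and "X \<in> carrier_mat (d1*d1) (d1*d1)" and "Y \<in> carrier_mat (d1*d1) (d1*d1)"
    and "psd (d1*d1) X" and "psd (d1*d1) Y"
    and "op_ge (d1*d1) ((of_nat d2 - 1) \<cdot>\<^sub>m ptrans d1 d1 X) (- ptrans d1 d1 Y)"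
    and "op_ge (d1*d1) ((of_nat d2 + 1) \<cdot>\<^sub>m ptrans d1 d1 X) (ptrans d1 d1 Y)"
    and "\<exists>\<alpha> \<in> carrier_vec (d1*d1). qform X \<alpha> = 0 \<and> Im (qform Y \<alpha>) = 0 \<and> Re (qform Y \<alpha>) > 0"
  shows "psd ((d1*d2)*(d1*d2)) (Zop d1 d2 X Y)
       \<and> ppt (d1*d2) (d1*d2) (Zop d1 d2 X Y)
       \<and> nat \<lceil>real d2 / real d1\<rceil> \<le> schmidt_number (d1*d2) (d1*d2) (Zop d1 d2 X Y)"
proof (intro conjI)
  show psd: "psd ((d1*d2)*(d1*d2)) (Zop d1 d2 X Y)"
    using psd_Zop assms(2,5,6) by blast
  show "ppt (d1*d2) (d1*d2) (Zop d1 d2 X Y)"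
    using ppt_Zop assms(1,2,5-8) by blast
  obtain \<alpha> where \<alpha>: "\<alpha> \<in> carrier_vec (d1*d1)" "qform X \<alpha> = 0" "qform Y \<alpha> \<noteq> 0"
    using assms(9) by force
  show "nat \<lceil>real d2 / real d1\<rceil> \<le> schmidt_number (d1*d2) (d1*d2) (Zop d1 d2 X Y)"
    using psd schmidt_rank_bound_in_decomposition[OF assms(1,2) \<alpha>] nat_ceiling_divide_le[OF assms(1)]
    by (intro schmidt_number_ge) blast+
qed

end
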